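(* Let $\Phi,\Psi\in\mathbb{R}^{n\times n}$ be symmetric matrices with eigenvalues $\phi_1\le\dots\le\phi_n$ and $\psi_1\le\dots\le\psi_n$ and corresponding orthonormal eigenvectors $w_1,\dots,w_n$ ($\Phi w_i=\phi_iw_i$) and $v_1,\dots,v_n$ ($\Psi v_i=\psi_iv_i$). Fix integers $j\ge0$, $r\ge1$ with $j+r\le n$, let $J=\{j+1,\dots,j+r\}$, $W_j=[w_{j+1},\dots,w_{j+r}]$ and $V_j=[v_{j+1},\dots,v_{j+r}]$. Assume the nonzero eigengap conditions $\phi_{j+1}-\phi_j>0$, $\phi_{j+r+1}-\phi_{j+r}>0$, $\psi_{j+1}-\psi_j>0$, $\psi_{j+r+1}-\psi_{j+r}>0$. Let $p$ be a real polynomial, $p(t)=c_lt^l+\dots+c_1t+c_0$, with $p(\Phi)=c_l\Phi^l+\dots+c_1\Phi+c_0I$. Define the two candidate parameter triplets $$a_1=\min_{i\in J}p(\phi_i),\quad b_1=\max_{i\in J}p(\phi_i),\quad \delta_1=\min(\psi_{j+r+1}-b_1,\ a_1-\psi_j),$$ $$a_2=\psi_{j+1},\quad b_2=\psi_{j+r},\quad \delta_2=\min\Big(\min_{i\in\mathcal{A}_1}p(\phi_i)-b_2,\ a_2-\max_{i\in\mathcal{A}_2}p(\phi_i)\Big),$$ where, for a triplet $(a,b,\delta)$, $\mathcal{A}_1=\{i\in\{1,\dots,n\}\setminus J: p(\phi_i)>b\}$ and $\mathcal{A}_2=\{i\in\{1,\dots,n\}\setminus J: p(\phi_i)<a\}$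 (in $\delta_2$ these are taken with $a=a_2,b=b_2$). Suppose that one of the following holds: (A) with $a=a_1,b=b_1$ one has $\mathcal{A}_1\cup\mathcal{A}_2=\{1,\dots,n\}\setminus J$, and $\delta_1>0$, $a_1-\psi_{j+1}<\delta_1$, $\psi_{j+r}-b_1<\delta_1$; in this case set $\delta=\delta_1$; (B) with $a=a_2,b=b_2$ one has $\mathcal{A}_1\cup\mathcal{A}_2=\{1,\dots,n\}\setminus J$, and $\delta_2>0$, $a_2-\min_{i\in J}p(\phi_i)<\delta_2$, $\max_{i\in J}p(\phi_i)-b_2<\delta_2$; in this case set $\delta=\delta_2$. Then for every unitarily invariant norm $\|\cdot\|$, $$\big\|W_jW_j^T(I-V_jV_j^T)\big\|\le\frac{\|p(\Phi)-\Psi\|}{\delta}.$$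
   Context: Convention: eigenvalues with out-of-range indices are interpreted as $\phi_0=\psi_0=-\infty$ and $\phi_{n+1}=\psi_{n+1}=+\infty$ (so conditions involving them are vacuous when $j=0$ or $j+r=n$), and a minimum over an empty index set is $+\infty$, a maximum over an empty index set is $-\infty$. A norm on $n\times n$ matrices is unitarily invariant if $\|UXV\|=\|X\|$ for all orthogonal $U,V$. $I$ is the $n\times n$ identity matrix. *)

theory Defs
  imports "HOL-Analysis.Analysis" "HOL-Computational_Algebra.Polynomial"
    "HOL-Library.Extended_Real"
begin

fun mat_pow :: "real^'n^'n \<Rightarrow> nat \<Rightarrow> real^'n^'n" where
  "mat_pow A 0 = mat 1"
| "mat_pow A (Suc k) = A ** mat_pow A k"

definition poly_mat :: "real poly \<Rightarrow> real^'n^'n \<Rightarrow> real^'n^'n" where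
  "poly_mat p A = (\<Sum>i\<le>degree p. coeff p i *\<^sub>R mat_pow A i)"

definition unitarily_invariant_norm :: "(real^'n^'n \<Rightarrow> real) \<Rightarrow> bool" where
  "unitarily_invariant_norm N \<longleftrightarrow>
     (\<forall>X. 0 \<le> N X) \<and> (\<forall>X. N X = 0 \<longleftrightarrow> X = 0) \<and>
     (\<forall>X Y. N (X + Y) \<le> N X + N Y) \<and> (\<forall>c X. N (c *\<^sub>R X) = \<bar>c\<bar> * N X) \<and>
     (\<forall>U V X. orthogonal_matrix U \<longrightarrow> orthogonal_matrix V \<longrightarrow> N (U ** X ** V) = N X)"

definition ext_eig :: "nat \<Rightarrow> (nat \<Rightarrow> real) \<Rightarrow> nat \<Rightarrow> ereal" where
  "ext_eig n f k = (if k = 0 then -\<infinity> else if n < k then \<infinity> else ereal (f k))"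

text \<open>W W^T for W = [u_i]_{i \<in> J} (sum of outer products).\<close>
definition proj_mat :: "(nat \<Rightarrow> real^'n) \<Rightarrow> nat set \<Rightarrow> real^'n^'n" where
  "proj_mat u J = (\<chi> a b. \<Sum>i\<in>J. u i $ a * u i $ b)"

definition calA1 :: "nat \<Rightarrow> nat set \<Rightarrow> (nat \<Rightarrow> real) \<Rightarrow> real \<Rightarrow> nat set" where
  "calA1 n J pp b = {i \<in> {1..n} - J. pp i > b}"
definition calA2 :: "nat \<Rightarrow> nat set \<Rightarrow> (nat \<Rightarrow> real) \<Rightarrow> real \<Rightarrow> nat set" where
  "calA2 n J pp a = {i \<in> {1..n} - J. pp i < a}"

end

theory Submission
  imports Defs
begin

text \<open>
  Both cases are instances of a Davis--Kahan estimate: if the eigenvalues of \<open>A\<close> on the block \<open>J\<close>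
  lie in \<open>[a, b]\<close> and those of \<open>B\<close> off \<open>J\<close> avoid \<open>(a - \<delta>, b + \<delta>)\<close>, then
  \<open>\<delta> \<parallel>P\<^sub>A (I - P\<^sub>B)\<parallel> \<le> \<parallel>A - B\<parallel>\<close> for the spectral projections \<open>P\<^sub>A, P\<^sub>B\<close> onto the \<open>J\<close>-block.
  After centring at the midpoint of \<open>[a, b]\<close>, \<open>P\<^sub>A (I - P\<^sub>B)\<close> solves a Sylvester equation, and
  multiplying by a spectral matrix with eigenvalues of modulus at most \<open>\<kappa>\<close> shrinks a unitarily
  invariant norm by the factor \<open>\<kappa>\<close>, such a matrix being \<open>\<kappa>\<close> times a convex combination of orthogonal
  matrices.  Case (A) applies the estimate to \<open>A = p(\<Phi>)\<close> and \<open>B = \<Psi>\<close>.  Case (B) applies it to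
  \<open>A = \<Psi>\<close> and \<open>B = p(\<Phi>)\<close>, which bounds \<open>\<parallel>V V\<^sup>T (I - W W\<^sup>T)\<parallel>\<close>; this equals
  \<open>\<parallel>W W\<^sup>T (I - V V\<^sup>T)\<parallel>\<close> because the two projections have equal rank, so that principal vectors
  pair their ranges.  An extended-real \<open>\<delta>\<close> is handled by using every real \<open>0 < d \<le> \<delta>\<close>.
\<close>

section \<open>Outer products and orthogonal projections\<close>

lemma matrix_add_rdistrib: "(A + B) ** C = A ** C + B ** C"
  by (vector matrix_matrix_mult_def sum.distrib[symmetric] field_simps)

lemma matrix_diff_ldistrib: "(A :: 'a::ring_1^'n^'m) ** (B - C) = A ** B - A ** C"
  by (vector matrix_matrix_mult_def sum_subtractf[symmetric] field_simps)

lemma matrix_diff_rdistrib: "((A - B) :: 'a::ring_1^'n^'m) ** C = A ** C - B ** C"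
  by (vector matrix_matrix_mult_def sum_subtractf[symmetric] field_simps)

lemma transpose_add: "transpose (A + B) = transpose A + transpose B"
  by (vector transpose_def)

lemma transpose_diff: "transpose ((A :: 'a::ab_group_add^'n^'m) - B) = transpose A - transpose B"
  by (vector transpose_def)

lemma transpose_zero: "transpose 0 = 0"
  by (vector transpose_def)

lemma transpose_sum: "transpose (\<Sum>i\<in>K. f i) = (\<Sum>i\<in>K. transpose (f i))"
  by (induction K rule: infinite_finite_induct) (simp_all add: transpose_zero transpose_add)

lemma matrix_mul_sum_left: "(\<Sum>i\<in>K. f i) ** A = (\<Sum>i\<in>K. f i ** A)"
  by (induction K rule: infinite_finite_induct) (simp_all add: matrix_add_rdistrib)

lemma matrix_mul_sum_right: "A ** (\<Sum>i\<in>K. f i) = (\<Sum>i\<in>K. A ** f i)"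
  by (induction K rule: infinite_finite_induct) (simp_all add: matrix_add_ldistrib)

lemma matrix_vector_mult_sum_left: "(\<Sum>i\<in>K. f i) *v x = (\<Sum>i\<in>K. f i *v x)"
  by (induction K rule: infinite_finite_induct) (simp_all add: matrix_vector_mult_add_rdistrib)

lemma matrix_mult_scaleR_right: "(A :: real^'n^'m) ** (c *\<^sub>R B) = c *\<^sub>R (A ** B)"
  by (simp add: matrix_scalar_ac scalar_matrix_assoc)

lemma scaleR_matrix_vector_assoc: "(c *\<^sub>R A) *v x = c *\<^sub>R (A *v (x :: real^'n))"
  by (simp add: matrix_vector_mult_def vec_eq_iff sum_distrib_left mult_ac)

lemma symmetric_matrix_inner:
  "transpose M = M \<Longrightarrow> x \<bullet> (M *v y) = (M *v x) \<bullet> (y :: real^'n)"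
  by (metis dot_lmul_matrix transpose_matrix_vector)

definition outer_prod :: "real^'n \<Rightarrow> real^'m \<Rightarrow> real^'m^'n" where
  "outer_prod x y = (\<chi> a b. x $ a * y $ b)"

lemma outer_prod_mult_vec: "outer_prod x y *v z = (y \<bullet> z) *\<^sub>R x"
  by (simp add: outer_prod_def matrix_vector_mult_def inner_vec_def vec_eq_iff sum_distrib_left
      mult_ac)

lemma matrix_mult_outer_prod: "M ** outer_prod x y = outer_prod (M *v x) y"
  by (simp add: outer_prod_def matrix_matrix_mult_def matrix_vector_mult_def vec_eq_iff
      sum_distrib_left mult_ac)

lemma outer_prod_mult_matrix: "outer_prod x y ** M = outer_prod x (transpose M *v y)"
  by (simp add: outer_prod_def matrix_matrix_mult_def matrix_vector_mult_def transpose_def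
      vec_eq_iff sum_distrib_left mult_ac)

lemma transpose_outer_prod: "transpose (outer_prod x y) = outer_prod y x"
  by (simp add: outer_prod_def transpose_def vec_eq_iff mult_ac)

lemma outer_prod_scaleR_left: "outer_prod (c *\<^sub>R x) y = c *\<^sub>R outer_prod x y"
  by (simp add: outer_prod_def vec_eq_iff mult_ac)

lemma outer_prod_scaleR_right: "outer_prod x (c *\<^sub>R y) = c *\<^sub>R outer_prod x y"
  by (simp add: outer_prod_def vec_eq_iff mult_ac)

definition proj_matrix :: "'i set \<Rightarrow> ('i \<Rightarrow> real^'n) \<Rightarrow> real^'n^'n" where
  "proj_matrix K u = (\<Sum>i\<in>K. outer_prod (u i) (u i))"

lemma proj_mat_eq_proj_matrix: "proj_mat u K = proj_matrix K u"
  by (simp add: proj_mat_def proj_matrix_def outer_prod_def vec_eq_iff sum_component)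

lemma proj_matrix_mult_vec: "proj_matrix K u *v x = (\<Sum>i\<in>K. (u i \<bullet> x) *\<^sub>R u i)"
  by (simp add: proj_matrix_def matrix_vector_mult_sum_left outer_prod_mult_vec)

lemma transpose_proj_matrix: "transpose (proj_matrix K u) = proj_matrix K u"
  by (simp add: proj_matrix_def transpose_sum transpose_outer_prod)

lemma proj_matrix_mult_compl:
  assumes "transpose Q = Q"
  shows "proj_matrix K u ** (mat 1 - Q) = (\<Sum>i\<in>K. outer_prod (u i) (u i - Q *v u i))"
  by (simp add: proj_matrix_def matrix_mul_sum_left outer_prod_mult_matrix
      transpose_diff assms matrix_vector_mult_diff_rdistrib)

definition orthonormal_on :: "'i set \<Rightarrow> ('i \<Rightarrow> real^'n) \<Rightarrow> bool" where
  "orthonormal_on K u \<longleftrightarrow> (\<forall>i\<in>K. \<forall>k\<in>K. u i \<bullet> u k = (if i = k then 1 else 0))"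

lemma orthonormal_onD:
  "orthonormal_on K u \<Longrightarrow> i \<in> K \<Longrightarrow> k \<in> K \<Longrightarrow> u i \<bullet> u k = (if i = k then 1 else 0)"
  by (simp add: orthonormal_on_def)

lemma orthonormal_on_subset: "orthonormal_on K u \<Longrightarrow> L \<subseteq> K \<Longrightarrow> orthonormal_on L u"
  unfolding orthonormal_on_def by blast

lemma orthonormal_on_sum_inner:
  fixes f :: "'i \<Rightarrow> 'a::real_vector"
  assumes "orthonormal_on K u" "finite K" "k \<in> K"
  shows "(\<Sum>i\<in>K. (u i \<bullet> u k) *\<^sub>R f i) = f k"
proof -
  have "(\<Sum>i\<in>K. (u i \<bullet> u k) *\<^sub>R f i) = (\<Sum>i\<in>K. if i = k then f k else 0)"
    using assms by (intro sum.cong) (auto simp: orthonormal_onD)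
  also have "\<dots> = f k"
    using assms by simp
  finally show ?thesis .
qed

lemma orthonormal_on_inner_sum:
  assumes "orthonormal_on K u" "finite K" "k \<in> K"
  shows "u k \<bullet> (\<Sum>i\<in>K. c i *\<^sub>R u i) = c k"
  using orthonormal_on_sum_inner[OF assms, of c]
  by (simp add: inner_sum_right inner_commute mult.commute)

lemma orthonormal_on_independent:
  assumes "orthonormal_on K u"
  shows "independent (u ` K)"
proof (rule pairwise_orthogonal_independent)
  show "pairwise orthogonal (u ` K)"
    using assms by (auto simp: pairwise_def orthogonal_def orthonormal_on_def)
  show "0 \<notin> u ` K"
    using assms by (auto dest: orthonormal_onD)
qed

lemma orthonormal_on_card_image: "orthonormal_on K u \<Longrightarrow> card (u ` K) = card K"
  by (intro card_image) (metis inj_onI orthonormal_onD zero_neq_one)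

lemma orthonormal_on_dim_span: "orthonormal_on K u \<Longrightarrow> dim (span (u ` K)) = card K"
  by (metis dim_span_eq_card_independent orthonormal_on_independent orthonormal_on_card_image)

lemma orthonormal_on_span_eq:
  assumes "orthonormal_on K u" "finite K" "subspace S" "u ` K \<subseteq> S" "dim S = card K"
  shows "span (u ` K) = S"
proof -
  have "S \<subseteq> span (u ` K)"
    using card_eq_dim[of "u ` K" S] assms orthonormal_on_independent[OF assms(1)]
      orthonormal_on_card_image[OF assms(1)] by simp
  then show ?thesis
    using assms span_minimal[of "u ` K" S] by blast
qed

lemma proj_matrix_mult_vec_in_span: "proj_matrix K u *v x \<in> span (u ` K)"
  unfolding proj_matrix_mult_vec by (intro span_sum span_mul span_base) auto

lemma proj_matrix_residual_orthogonal:
  assumes "orthonormal_on K u" "finite K" "y \<in> span (u ` K)"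
  shows "(x - proj_matrix K u *v x) \<bullet> y = 0"
proof -
  have "orthogonal (x - proj_matrix K u *v x) y"
  proof (rule orthogonal_to_span[OF assms(3)])
    fix z assume "z \<in> u ` K"
    then show "orthogonal (x - proj_matrix K u *v x) z"
      using assms orthonormal_on_inner_sum[OF assms(1,2), of _ "\<lambda>i. u i \<bullet> x"]
      by (auto simp: orthogonal_def proj_matrix_mult_vec inner_diff_right inner_commute)
  qed
  then show ?thesis
    by (simp add: orthogonal_def)
qed

lemma proj_matrix_fixes_span:
  assumes "orthonormal_on K u" "finite K" "x \<in> span (u ` K)"
  shows "proj_matrix K u *v x = x"
proof -
  have "x - proj_matrix K u *v x \<in> span (u ` K)"
    by (intro span_diff assms(3) proj_matrix_mult_vec_in_span)
  then have "(x - proj_matrix K u *v x) \<bullet> (x - proj_matrix K u *v x) = 0"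
    by (rule proj_matrix_residual_orthogonal[OF assms(1,2)])
  then show ?thesis
    by simp
qed

lemma proj_matrix_eq_if_span_eq:
  assumes u: "orthonormal_on K u" "finite K" and v: "orthonormal_on L v" "finite L"
    and span: "span (u ` K) = span (v ` L)"
  shows "proj_matrix K u = proj_matrix L v"
proof (rule matrix_eq[THEN iffD2], intro allI)
  fix x
  let ?y = "proj_matrix L v *v x"
  have "proj_matrix K u *v ?y = ?y"
    using span proj_matrix_mult_vec_in_span by (intro proj_matrix_fixes_span[OF u]) blast
  moreover have "proj_matrix K u *v (x - ?y) = 0"
  proof -
    have "u i \<in> span (v ` L)" if "i \<in> K" for i
      using that span span_base[of "u i" "u ` K"] by auto
    then show ?thesis
      using proj_matrix_residual_orthogonal[OF v, of _ x]
      by (auto simp: proj_matrix_mult_vec inner_commute intro!: sum.neutral)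
  qed
  ultimately show "proj_matrix K u *v x = ?y"
    by (simp add: matrix_vector_mult_diff_distrib)
qed

lemma proj_matrix_complete:
  fixes u :: "'i \<Rightarrow> real^'n"
  assumes "orthonormal_on K u" "finite K" "card K = CARD('n)"
  shows "proj_matrix K u = (mat 1 :: real^'n^'n)"
proof (rule matrix_eq[THEN iffD2], intro allI)
  fix x :: "real^'n"
  have "span (u ` K) = UNIV"
    using assms by (intro orthonormal_on_span_eq) auto
  then show "proj_matrix K u *v x = mat 1 *v x"
    using proj_matrix_fixes_span[OF assms(1,2)] by simp
qed

section \<open>Spectral matrices and unitarily invariant norms\<close>

definition spectral_matrix :: "'i set \<Rightarrow> ('i \<Rightarrow> real^'n) \<Rightarrow> ('i \<Rightarrow> real) \<Rightarrow> real^'n^'n" where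
  "spectral_matrix K u c = (\<Sum>i\<in>K. c i *\<^sub>R outer_prod (u i) (u i))"

lemma spectral_matrix_cong:
  "(\<And>i. i \<in> K \<Longrightarrow> c i = d i) \<Longrightarrow> spectral_matrix K u c = spectral_matrix K u d"
  by (simp add: spectral_matrix_def)

lemma spectral_matrix_add:
  "spectral_matrix K u (\<lambda>i. c i + d i) = spectral_matrix K u c + spectral_matrix K u d"
  by (simp add: spectral_matrix_def scaleR_add_left sum.distrib)

lemma spectral_matrix_diff:
  "spectral_matrix K u (\<lambda>i. c i - d i) = spectral_matrix K u c - spectral_matrix K u d"
  by (simp add: spectral_matrix_def scaleR_diff_left sum_subtractf)

lemma spectral_matrix_scaleR:
  "spectral_matrix K u (\<lambda>i. s * c i) = s *\<^sub>R spectral_matrix K u c"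
  by (simp add: spectral_matrix_def scaleR_sum_right)

lemma transpose_spectral_matrix: "transpose (spectral_matrix K u c) = spectral_matrix K u c"
  by (simp add: spectral_matrix_def transpose_sum transpose_scalar transpose_outer_prod)

lemma spectral_matrix_one: "spectral_matrix K u (\<lambda>_. 1) = proj_matrix K u"
  by (simp add: spectral_matrix_def proj_matrix_def)

lemma spectral_matrix_indicator:
  assumes "I \<subseteq> K" "finite K"
  shows "spectral_matrix K u (\<lambda>i. if i \<in> I then 1 else 0) = proj_matrix I u"
proof -
  have "spectral_matrix K u (\<lambda>i. if i \<in> I then 1 else 0)
      = (\<Sum>i\<in>K \<inter> I. outer_prod (u i) (u i))"
    unfolding spectral_matrix_def using assms(2)
    by (simp add: sum.inter_restrict[symmetric] if_distrib[of "\<lambda>c. c *\<^sub>R _"] cong: if_cong)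
  also have "K \<inter> I = I"
    using assms(1) by blast
  finally show ?thesis
    by (simp add: proj_matrix_def)
qed

lemma spectral_matrix_mult_vec:
  assumes "orthonormal_on K u" "finite K" "k \<in> K"
  shows "spectral_matrix K u c *v u k = c k *\<^sub>R u k"
  using orthonormal_on_sum_inner[OF assms, of "\<lambda>i. c i *\<^sub>R u i"]
  by (simp add: spectral_matrix_def matrix_vector_mult_sum_left scaleR_matrix_vector_assoc
      outer_prod_mult_vec mult.commute)

lemma spectral_matrix_mult:
  assumes "orthonormal_on K u" "finite K"
  shows "spectral_matrix K u c ** spectral_matrix K u d = spectral_matrix K u (\<lambda>i. c i * d i)"
  unfolding spectral_matrix_def[of K u c] spectral_matrix_def[of K u "\<lambda>i. c i * d i"]
  by (auto simp: matrix_mul_sum_left scalar_matrix_assoc[symmetric] outer_prod_mult_matrix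
      transpose_spectral_matrix spectral_matrix_mult_vec[OF assms] outer_prod_scaleR_right
      intro!: sum.cong)

lemma spectral_matrix_eigen:
  fixes u :: "'i \<Rightarrow> real^'n"
  assumes "orthonormal_on K u" "finite K" "card K = CARD('n)"
    and "\<And>i. i \<in> K \<Longrightarrow> A *v u i = c i *\<^sub>R u i"
  shows "A = spectral_matrix K u c"
proof -
  have "A = A ** proj_matrix K u"
    using proj_matrix_complete[OF assms(1-3)] by simp
  also have "\<dots> = spectral_matrix K u c"
    using assms(4)
    by (simp add: proj_matrix_def matrix_mul_sum_right matrix_mult_outer_prod
        outer_prod_scaleR_left spectral_matrix_def)
  finally show ?thesis .
qed

lemma mat_1_minus_proj_matrix:
  fixes u :: "'i \<Rightarrow> real^'n"
  assumes "orthonormal_on K u" "finite K" "card K = CARD('n)" "I \<subseteq> K"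
  shows "mat 1 - proj_matrix I u = proj_matrix (K - I) u"
  using proj_matrix_complete[OF assms(1-3)]
    sum_diff[OF assms(2,4), of "\<lambda>i. outer_prod (u i) (u i)"]
  by (simp add: proj_matrix_def)

lemma orthogonal_matrix_spectral_matrix:
  fixes u :: "'i \<Rightarrow> real^'n"
  assumes "orthonormal_on K u" "finite K" "card K = CARD('n)" "\<And>i. i \<in> K \<Longrightarrow> \<bar>d i\<bar> = 1"
  shows "orthogonal_matrix (spectral_matrix K u d)"
proof -
  have "spectral_matrix K u d ** spectral_matrix K u d = spectral_matrix K u (\<lambda>_. 1)"
    using assms(4) unfolding spectral_matrix_mult[OF assms(1,2)]
    by (intro spectral_matrix_cong) (metis abs_mult_self_eq mult_1)
  also have "\<dots> = mat 1"
    using proj_matrix_complete[OF assms(1-3)] by (simp add: spectral_matrix_one)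
  finally show ?thesis
    by (simp add: orthogonal_matrix transpose_spectral_matrix)
qed

lemma unitarily_invariant_norm_triangle:
  "unitarily_invariant_norm N \<Longrightarrow> N (X + Y) \<le> N X + N Y"
  by (simp add: unitarily_invariant_norm_def)

lemma unitarily_invariant_norm_scaleR:
  "unitarily_invariant_norm N \<Longrightarrow> N (c *\<^sub>R X) = \<bar>c\<bar> * N X"
  by (simp add: unitarily_invariant_norm_def)

lemma unitarily_invariant_norm_orthogonal:
  "unitarily_invariant_norm N \<Longrightarrow> orthogonal_matrix U \<Longrightarrow> orthogonal_matrix V \<Longrightarrow>
    N (U ** X ** V) = N X"
  by (simp add: unitarily_invariant_norm_def)

lemma unitarily_invariant_norm_minus_commute:
  "unitarily_invariant_norm N \<Longrightarrow> N (X - Y) = N (Y - X)"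
  using unitarily_invariant_norm_scaleR[of N "-1" "X - Y"] by simp

lemma unitarily_invariant_norm_triangle_diff:
  "unitarily_invariant_norm N \<Longrightarrow> N (X - Y) \<le> N X + N Y"
  using unitarily_invariant_norm_triangle[of N X "-Y"] unitarily_invariant_norm_scaleR[of N "-1" Y]
  by simp

lemma linear_matrix_mult_left: "linear (\<lambda>D. D ** (X :: real^'n^'n))"
  by (intro linearI) (simp_all add: matrix_add_rdistrib scalar_matrix_assoc)

lemma linear_matrix_mult_right: "linear (\<lambda>D. (X :: real^'n^'n) ** D)"
  by (intro linearI) (simp_all add: matrix_add_ldistrib matrix_mult_scaleR_right)

text \<open>A spectral matrix with eigenvalues in \<open>[-1, 1]\<close> is a convex combination of orthogonal
  ones (eigenvalues \<open>\<plusminus>1\<close>); induct on the number of eigenvalues different from \<open>\<plusminus>1\<close>.\<close>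

lemma seminorm_spectral_convex_bound:
  fixes u :: "'i \<Rightarrow> real^'n"
  assumes triangle: "\<And>X Y. N (X + Y) \<le> N X + N Y" and scaleR: "\<And>c X. N (c *\<^sub>R X) = \<bar>c\<bar> * N X"
    and u: "orthonormal_on K u" "finite K" "card K = CARD('n)"
    and F: "linear F" and orth: "\<And>U. orthogonal_matrix U \<Longrightarrow> N (F U) \<le> c"
    and d: "\<And>i. i \<in> K \<Longrightarrow> \<bar>d i\<bar> \<le> 1"
  shows "N (F (spectral_matrix K u d)) \<le> c"
  using d
proof (induction "card {i \<in> K. \<bar>d i\<bar> \<noteq> 1}" arbitrary: d rule: less_induct)
  case less
  show ?case
  proof (cases "{i \<in> K. \<bar>d i\<bar> \<noteq> 1} = {}")
    case True
    then show ?thesis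
      by (intro orth orthogonal_matrix_spectral_matrix[OF u]) blast
  next
    case False
    then obtain k where k: "k \<in> K" "\<bar>d k\<bar> \<noteq> 1"
      by blast
    define \<alpha> where "\<alpha> = (1 + d k) / 2"
    define \<beta> where "\<beta> = (1 - d k) / 2"
    have \<alpha>\<beta>: "0 \<le> \<alpha>" "0 \<le> \<beta>" "\<alpha> + \<beta> = 1"
      using less.prems[OF k(1)] by (auto simp: \<alpha>_def \<beta>_def field_simps)
    have bound: "N (F (spectral_matrix K u (d(k := s)))) \<le> c" if "\<bar>s\<bar> = 1" for s
    proof (rule less.hyps)
      have "{i \<in> K. \<bar>(d(k := s)) i\<bar> \<noteq> 1} = {i \<in> K. \<bar>d i\<bar> \<noteq> 1} - {k}"
        using that by auto
      then show "card {i \<in> K. \<bar>(d(k := s)) i\<bar> \<noteq> 1} < card {i \<in> K. \<bar>d i\<bar> \<noteq> 1}"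
        using k u(2) by (simp only:) (intro card_Diff1_less; simp)
      show "\<bar>(d(k := s)) i\<bar> \<le> 1" if "i \<in> K" for i
        using that less.prems \<open>\<bar>s\<bar> = 1\<close> by simp
    qed
    have "spectral_matrix K u d
        = spectral_matrix K u (\<lambda>i. \<alpha> * (d(k := 1)) i + \<beta> * (d(k := -1)) i)"
      by (intro spectral_matrix_cong) (auto simp: \<alpha>_def \<beta>_def field_simps)
    then have "F (spectral_matrix K u d)
        = \<alpha> *\<^sub>R F (spectral_matrix K u (d(k := 1))) + \<beta> *\<^sub>R F (spectral_matrix K u (d(k := -1)))"
      by (simp only: spectral_matrix_add spectral_matrix_scaleR linear_add[OF F] linear_scale[OF F])
    then have "N (F (spectral_matrix K u d))
        \<le> \<alpha> * N (F (spectral_matrix K u (d(k := 1)))) + \<beta> * N (F (spectral_matrix K u (d(k := -1))))"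
      using triangle scaleR \<alpha>\<beta> by (metis abs_of_nonneg)
    also have "\<dots> \<le> \<alpha> * c + \<beta> * c"
      using bound[of 1] bound[of "-1"] \<alpha>\<beta> by (intro add_mono mult_left_mono) auto
    also have "\<dots> = c"
      using \<alpha>\<beta>(3) by (metis distrib_right mult_1)
    finally show ?thesis .
  qed
qed

lemma unitarily_invariant_norm_spectral_contraction:
  fixes u :: "'i \<Rightarrow> real^'n"
  assumes N: "unitarily_invariant_norm N"
    and u: "orthonormal_on K u" "finite K" "card K = CARD('n)"
    and m: "\<And>i. i \<in> K \<Longrightarrow> \<bar>m i\<bar> \<le> \<kappa>"
  shows "N (spectral_matrix K u m ** X) \<le> \<kappa> * N X"
    and "N (X ** spectral_matrix K u m) \<le> \<kappa> * N X"
proof -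
  have "K \<noteq> {}"
    using u(3) by auto
  then have "0 \<le> \<kappa>"
    using m by force
  define d where "d i = m i / \<kappa>" for i
  have S: "spectral_matrix K u m = \<kappa> *\<^sub>R spectral_matrix K u d"
  proof (cases "\<kappa> = 0")
    case True
    then show ?thesis
      using m by (auto simp: spectral_matrix_def intro!: sum.neutral)
  next
    case False
    then show ?thesis
      by (simp add: d_def flip: spectral_matrix_scaleR)
  qed
  have d: "\<bar>d i\<bar> \<le> 1" if "i \<in> K" for i
    using m[OF that] \<open>0 \<le> \<kappa>\<close> by (cases "\<kappa> = 0") (auto simp: d_def abs_divide divide_le_eq_1)
  have "N (spectral_matrix K u d ** X) \<le> N X"
    using unitarily_invariant_norm_orthogonal[OF N _ orthogonal_matrix_id]
    by (intro seminorm_spectral_convex_bound[OF unitarily_invariant_norm_triangle[OF N]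
          unitarily_invariant_norm_scaleR[OF N] u linear_matrix_mult_left _ d]) simp
  then show "N (spectral_matrix K u m ** X) \<le> \<kappa> * N X"
    using \<open>0 \<le> \<kappa>\<close> by (simp add: S unitarily_invariant_norm_scaleR[OF N] mult_left_mono
        flip: scalar_matrix_assoc)
  have "N (X ** spectral_matrix K u d) \<le> N X"
    using unitarily_invariant_norm_orthogonal[OF N orthogonal_matrix_id]
    by (intro seminorm_spectral_convex_bound[OF unitarily_invariant_norm_triangle[OF N]
          unitarily_invariant_norm_scaleR[OF N] u linear_matrix_mult_right _ d]) simp
  then show "N (X ** spectral_matrix K u m) \<le> \<kappa> * N X"
    using \<open>0 \<le> \<kappa>\<close> by (simp add: S unitarily_invariant_norm_scaleR[OF N] mult_left_mono
        matrix_mult_scaleR_right)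
qed

lemma spectral_matrix_shift:
  fixes u :: "'i \<Rightarrow> real^'n"
  assumes "orthonormal_on K u" "finite K" "card K = CARD('n)"
  shows "spectral_matrix K u (\<lambda>i. c i - s) = spectral_matrix K u c - s *\<^sub>R mat 1"
  using spectral_matrix_diff[of K u c "\<lambda>_. s"] spectral_matrix_scaleR[of K u s "\<lambda>_. 1"]
    proj_matrix_complete[OF assms]
  by (simp add: spectral_matrix_one)

text \<open>The Sylvester equation behind the Davis--Kahan estimate: after shifting both spectra by
  \<open>c\<close>, the compression of \<open>A - c\<close> to \<open>P\<^sub>1\<close> and the inverse \<open>G\<close> of \<open>B - c\<close> on the range of
  \<open>P\<^sub>2\<close> express \<open>X = P\<^sub>1 P\<^sub>2\<close> through itself and \<open>A - B\<close>.\<close>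

lemma spectral_projection_sylvester:
  fixes u v :: "'i \<Rightarrow> real^'n"
  assumes u: "orthonormal_on K u" "finite K" "card K = CARD('n)" and v: "orthonormal_on K v"
    and I: "I1 \<subseteq> K" "I2 \<subseteq> K" and nz: "\<And>i. i \<in> I2 \<Longrightarrow> \<beta> i \<noteq> c"
  defines "X \<equiv> proj_matrix I1 u ** proj_matrix I2 v"
    and "G \<equiv> spectral_matrix K v (\<lambda>i. if i \<in> I2 then 1 / (\<beta> i - c) else 0)"
  shows "X = spectral_matrix K u (\<lambda>i. if i \<in> I1 then \<alpha> i - c else 0) ** X ** G
    - proj_matrix I1 u ** (spectral_matrix K u \<alpha> - spectral_matrix K v \<beta>) ** G"
proof -
  have v': "orthonormal_on K v" "finite K" "card K = CARD('n)"
    using u v by auto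
  define Ac where "Ac = spectral_matrix K u (\<lambda>i. if i \<in> I1 then \<alpha> i - c else 0)"
  define P1 P2 where "P1 = proj_matrix I1 u" and "P2 = proj_matrix I2 v"
  have P1: "P1 = spectral_matrix K u (\<lambda>i. if i \<in> I1 then 1 else 0)"
    and P2: "P2 = spectral_matrix K v (\<lambda>i. if i \<in> I2 then 1 else 0)"
    using I by (simp_all add: P1_def P2_def spectral_matrix_indicator u(2))
  have "spectral_matrix K u \<alpha> - spectral_matrix K v \<beta>
      = spectral_matrix K u (\<lambda>i. \<alpha> i - c) - spectral_matrix K v (\<lambda>i. \<beta> i - c)"
    by (simp add: spectral_matrix_shift[OF u] spectral_matrix_shift[OF v'])
  moreover have "P1 ** spectral_matrix K u (\<lambda>i. \<alpha> i - c) = Ac"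
    by (auto simp: P1 Ac_def spectral_matrix_mult[OF u(1,2)] intro!: spectral_matrix_cong)
  moreover have "spectral_matrix K v (\<lambda>i. \<beta> i - c) ** G = P2"
    using nz unfolding P2 G_def spectral_matrix_mult[OF v'(1,2)]
    by (intro spectral_matrix_cong) simp
  moreover have "Ac ** P1 = Ac" and "P2 ** G = G"
    by (auto simp: P1 P2 Ac_def G_def spectral_matrix_mult[OF u(1,2)]
        spectral_matrix_mult[OF v'(1,2)] intro!: spectral_matrix_cong)
  ultimately show ?thesis
    unfolding X_def Ac_def[symmetric] P1_def[symmetric] P2_def[symmetric]
    by (simp add: matrix_diff_ldistrib matrix_diff_rdistrib flip: matrix_mul_assoc)
      (metis matrix_mul_assoc)
qed

text \<open>By the Sylvester equation and the contraction bounds \<open>\<bar>\<alpha> i - c\<bar> \<le> \<rho>\<close> on \<open>I\<^sub>1\<close> and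
  \<open>\<bar>\<beta> i - c\<bar> \<ge> \<rho> + \<delta>\<close> on \<open>I\<^sub>2\<close> (with \<open>c, \<rho>\<close> the midpoint and radius of \<open>[a, b]\<close>),
  \<open>(\<rho> + \<delta>) \<parallel>P\<^sub>1 P\<^sub>2\<parallel> \<le> \<rho> \<parallel>P\<^sub>1 P\<^sub>2\<parallel> + \<parallel>A - B\<parallel>\<close>.\<close>

lemma separated_spectra_bound:
  fixes u v :: "'i \<Rightarrow> real^'n"
  assumes N: "unitarily_invariant_norm N"
    and u: "orthonormal_on K u" "finite K" "card K = CARD('n)" and v: "orthonormal_on K v"
    and I: "I1 \<subseteq> K" "I2 \<subseteq> K" and "a \<le> b" "0 < \<delta>"
    and \<alpha>: "\<And>i. i \<in> I1 \<Longrightarrow> a \<le> \<alpha> i \<and> \<alpha> i \<le> b"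
    and \<beta>: "\<And>i. i \<in> I2 \<Longrightarrow> \<beta> i \<le> a - \<delta> \<or> b + \<delta> \<le> \<beta> i"
  shows "\<delta> * N (proj_matrix I1 u ** proj_matrix I2 v)
    \<le> N (spectral_matrix K u \<alpha> - spectral_matrix K v \<beta>)"
proof -
  have v': "orthonormal_on K v" "finite K" "card K = CARD('n)"
    using u v by auto
  define c \<rho> where "c = (a + b) / 2" and "\<rho> = (b - a) / 2"
  define X E where "X = proj_matrix I1 u ** proj_matrix I2 v"
    and "E = spectral_matrix K u \<alpha> - spectral_matrix K v \<beta>"
  define Ac G where "Ac = spectral_matrix K u (\<lambda>i. if i \<in> I1 then \<alpha> i - c else 0)"
    and "G = spectral_matrix K v (\<lambda>i. if i \<in> I2 then 1 / (\<beta> i - c) else 0)"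
  have "0 \<le> \<rho>"
    using \<open>a \<le> b\<close> by (simp add: \<rho>_def)
  have gap: "\<rho> + \<delta> \<le> \<bar>\<beta> i - c\<bar>" if "i \<in> I2" for i
    using \<beta>[OF that] \<open>a \<le> b\<close> by (auto simp: c_def \<rho>_def abs_if field_simps)
  then have "\<beta> i \<noteq> c" if "i \<in> I2" for i
    using that \<open>0 < \<delta>\<close> \<open>0 \<le> \<rho>\<close> by fastforce
  then have X: "X = Ac ** X ** G - proj_matrix I1 u ** E ** G"
    unfolding X_def E_def Ac_def G_def by (rule spectral_projection_sylvester[OF u v I])
  have G_contraction: "N (Y ** G) \<le> 1 / (\<rho> + \<delta>) * N Y" for Y
    unfolding G_def using gap \<open>0 < \<delta>\<close> \<open>0 \<le> \<rho>\<close>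
    by (intro unitarily_invariant_norm_spectral_contraction(2)[OF N v'])
      (auto simp: abs_divide intro: frac_le)
  have "N (Ac ** X) \<le> \<rho> * N X"
  proof -
    have "\<bar>\<alpha> i - c\<bar> \<le> \<rho>" if "i \<in> I1" for i
      using \<alpha>[OF that] unfolding c_def \<rho>_def by (auto simp: abs_le_iff field_simps)
    then show ?thesis
      unfolding Ac_def using \<open>0 \<le> \<rho>\<close>
      by (intro unitarily_invariant_norm_spectral_contraction(1)[OF N u]) simp
  qed
  moreover have "N (proj_matrix I1 u ** E) \<le> 1 * N E"
    using unitarily_invariant_norm_spectral_contraction(1)[OF N u,
        of "\<lambda>i. if i \<in> I1 then 1 else 0" 1 E]
    by (simp add: spectral_matrix_indicator[OF I(1) u(2)])
  ultimately have "N X \<le> 1 / (\<rho> + \<delta>) * (\<rho> * N X) + 1 / (\<rho> + \<delta>) * N E"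
    using unitarily_invariant_norm_triangle_diff[OF N,
        of "Ac ** X ** G" "proj_matrix I1 u ** E ** G"] G_contraction[of "Ac ** X"] G_contraction[of "proj_matrix I1 u ** E"] X \<open>0 < \<delta>\<close> \<open>0 \<le> \<rho>\<close>
    by (smt (verit) divide_nonneg_nonneg mult_left_mono)
  then have "(\<rho> + \<delta>) * N X \<le> (\<rho> + \<delta>) * (1 / (\<rho> + \<delta>) * (\<rho> * N X) + 1 / (\<rho> + \<delta>) * N E)"
    using \<open>0 < \<delta>\<close> \<open>0 \<le> \<rho>\<close> by (intro mult_left_mono) auto
  also have "\<dots> = \<rho> * N X + N E"
    using \<open>0 < \<delta>\<close> \<open>0 \<le> \<rho>\<close> by (simp add: distrib_left)
  finally have "(\<rho> + \<delta>) * N X \<le> \<rho> * N X + N E" .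
  then show ?thesis
    by (simp add: X_def E_def algebra_simps)
qed

lemma davis_kahan_sin_theta:
  fixes u v :: "'i \<Rightarrow> real^'n"
  assumes N: "unitarily_invariant_norm N"
    and u: "orthonormal_on K u" and v: "orthonormal_on K v" and K: "finite K" "card K = CARD('n)"
    and A: "\<And>i. i \<in> K \<Longrightarrow> A *v u i = \<alpha> i *\<^sub>R u i"
    and B: "\<And>i. i \<in> K \<Longrightarrow> B *v v i = \<beta> i *\<^sub>R v i"
    and "J \<subseteq> K" "a \<le> b" "0 < \<delta>"
    and inside: "\<And>i. i \<in> J \<Longrightarrow> a \<le> \<alpha> i \<and> \<alpha> i \<le> b"
    and outside: "\<And>i. i \<in> K - J \<Longrightarrow> \<beta> i \<le> a - \<delta> \<or> b + \<delta> \<le> \<beta> i"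
  shows "\<delta> * N (proj_matrix J u ** (mat 1 - proj_matrix J v)) \<le> N (A - B)"
proof -
  have "A = spectral_matrix K u \<alpha>" "B = spectral_matrix K v \<beta>"
    using spectral_matrix_eigen u v K A B by blast+
  moreover have "mat 1 - proj_matrix J v = proj_matrix (K - J) v"
    using mat_1_minus_proj_matrix[OF v K \<open>J \<subseteq> K\<close>] .
  ultimately show ?thesis
    using separated_spectra_bound[OF N u K v \<open>J \<subseteq> K\<close> Diff_subset \<open>a \<le> b\<close> \<open>0 < \<delta>\<close> inside outside]
    by simp
qed

section \<open>Orthonormal eigenbases and orthogonal maps\<close>

lemma quadratic_form_maximiser:
  fixes M :: "real^'n^'n"
  assumes S: "subspace S" "S \<noteq> {0}"
  obtains x where "x \<in> S" "x \<bullet> x = 1"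
    "\<And>z. z \<in> S \<Longrightarrow> z \<bullet> (M *v z) \<le> (x \<bullet> (M *v x)) * (z \<bullet> z)"
proof -
  define q where "q z = z \<bullet> (M *v z)" for z
  define U where "U = sphere 0 1 \<inter> S"
  obtain z where z: "z \<in> S" "z \<noteq> 0"
    using S subspace_0 by blast
  then have "z /\<^sub>R norm z \<in> U"
    using S by (simp add: U_def subspace_scale)
  moreover have "compact U"
    unfolding U_def using S by (intro compact_Int_closed compact_sphere closed_subspace)
  moreover have "continuous_on U q"
    unfolding q_def by (intro continuous_intros)
  ultimately obtain x where x: "x \<in> U" and max: "\<And>y. y \<in> U \<Longrightarrow> q y \<le> q x"
    using continuous_attains_sup[of U q] by blast
  have "q z \<le> q x * (z \<bullet> z)" if "z \<in> S" for z
  proof (cases "z = 0")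
    case False
    then have "q (z /\<^sub>R norm z) \<le> q x"
      using that S by (auto simp: U_def subspace_scale intro: max)
    then show ?thesis
      using False by (simp add: q_def matrix_vector_mult_scaleR field_simps flip: dot_square_norm
          power2_eq_square)
  qed (simp add: q_def)
  then show ?thesis
    using that x by (auto simp: U_def norm_eq_1 q_def)
qed

text \<open>The maximiser \<open>x\<close> of the Rayleigh quotient over \<open>S\<close> is an eigenvector: the residual
  \<open>y = M x - q(x) x\<close> would otherwise increase the quotient at \<open>x + t y\<close> for small \<open>t > 0\<close>.\<close>

lemma symmetric_matrix_eigenvector_in_subspace:
  fixes M :: "real^'n^'n"
  assumes sym: "transpose M = M" and S: "subspace S" "S \<noteq> {0}"
    and inv: "\<And>x. x \<in> S \<Longrightarrow> M *v x \<in> S"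
  obtains x \<mu> where "x \<in> S" "norm x = 1" "M *v x = \<mu> *\<^sub>R x"
proof -
  define q where "q z = z \<bullet> (M *v z)" for z
  obtain x where xS: "x \<in> S" and xx: "x \<bullet> x = 1" and max: "\<And>z. z \<in> S \<Longrightarrow> q z \<le> q x * (z \<bullet> z)"
    using quadratic_form_maximiser[OF S, of M] unfolding q_def by blast
  define y where "y = M *v x - q x *\<^sub>R x"
  have yS: "y \<in> S"
    using S xS inv by (simp add: y_def subspace_diff subspace_scale)
  have xy: "x \<bullet> y = 0"
    using xx by (simp add: y_def q_def inner_diff_right)
  have Mxy: "x \<bullet> (M *v y) = y \<bullet> y"
    using xy by (simp add: symmetric_matrix_inner[OF sym] y_def inner_diff_left inner_commute)
  have "y \<bullet> y \<le> t * (q x * (y \<bullet> y) - q y) / 2" if "0 < t" for t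
  proof -
    have "q (x + t *\<^sub>R y) = q x + 2 * t * (y \<bullet> y) + t * t * q y"
      using Mxy symmetric_matrix_inner[OF sym, of y x]
      by (simp add: q_def matrix_vector_right_distrib matrix_vector_mult_scaleR
          inner_add_left inner_add_right inner_commute algebra_simps)
    moreover have "(x + t *\<^sub>R y) \<bullet> (x + t *\<^sub>R y) = 1 + t * t * (y \<bullet> y)"
      using xx xy by (simp add: inner_add_left inner_add_right inner_commute algebra_simps)
    moreover have "x + t *\<^sub>R y \<in> S"
      using S xS yS by (simp add: subspace_add subspace_scale)
    ultimately have "t * (2 * (y \<bullet> y)) \<le> t * (t * (q x * (y \<bullet> y) - q y))"
      using max[of "x + t *\<^sub>R y"] xx xy by (simp add: inner_commute algebra_simps)
    then show ?thesis
      using that by (simp add: mult_le_cancel_left_pos)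
  qed
  moreover have "((\<lambda>t. t * (q x * (y \<bullet> y) - q y) / 2) \<longlongrightarrow> 0) (at_right 0)"
    by (auto intro!: tendsto_eq_intros)
  ultimately have "y \<bullet> y \<le> 0"
    by (intro tendsto_lowerbound[of _ 0 "at_right 0"])
      (auto simp: eventually_at_right_field intro!: exI[of _ 1])
  then have "y = 0"
    by (metis inner_eq_zero_iff inner_ge_zero order_antisym)
  then show ?thesis
    using that xS xx by (simp add: y_def norm_eq_1)
qed

lemma dim_orthogonal_complement_in_subspace:
  fixes x :: "'a::euclidean_space"
  assumes "subspace S" "x \<in> S" "x \<noteq> 0"
  shows "Suc (dim {y \<in> S. x \<bullet> y = 0}) = dim S"
proof -
  have "span {x} \<subseteq> S"
    using assms by (simp add: span_minimal)
  then have "dim {y \<in> S. \<forall>z\<in>span {x}. orthogonal z y} + dim (span {x}) = dim S"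
    by (rule dim_subspace_orthogonal_to_vectors[OF subspace_span assms(1)])
  moreover have "{y \<in> S. \<forall>z\<in>span {x}. orthogonal z y} = {y \<in> S. x \<bullet> y = 0}"
    by (auto simp: span_singleton orthogonal_def)
  ultimately show ?thesis
    using assms(3) by simp
qed

lemma span_insert_orthogonal_complement:
  fixes x :: "'a::euclidean_space"
  assumes S: "subspace S" and x: "x \<in> S" "x \<bullet> x = 1" and B: "span B = {y \<in> S. x \<bullet> y = 0}"
  shows "span (insert x B) = S"
proof
  have "B \<subseteq> S"
    using B span_superset[of B] by blast
  then show "span (insert x B) \<subseteq> S"
    using S x by (simp add: span_minimal)
  show "S \<subseteq> span (insert x B)"
  proof
    fix s assume "s \<in> S"
    then have "s - (x \<bullet> s) *\<^sub>R x \<in> span B"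
      using B x S by (simp add: subspace_diff subspace_scale inner_diff_right)
    then have "s - (x \<bullet> s) *\<^sub>R x \<in> span (insert x B)"
      using span_mono[OF subset_insertI, of B x] by blast
    moreover have "(x \<bullet> s) *\<^sub>R x \<in> span (insert x B)"
      by (simp add: span_base span_mul)
    ultimately have "s - (x \<bullet> s) *\<^sub>R x + (x \<bullet> s) *\<^sub>R x \<in> span (insert x B)"
      by (rule span_add)
    then show "s \<in> span (insert x B)"
      by simp
  qed
qed

lemma symmetric_matrix_orthonormal_eigenbasis:
  fixes M :: "real^'n^'n"
  assumes sym: "transpose M = M" and "subspace S" and "\<And>x. x \<in> S \<Longrightarrow> M *v x \<in> S"
  obtains B where "B \<subseteq> S" "pairwise orthogonal B" "\<And>x. x \<in> B \<Longrightarrow> norm x = 1" "span B = S"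
    "\<And>x. x \<in> B \<Longrightarrow> \<exists>\<mu>. M *v x = \<mu> *\<^sub>R x"
  using assms(2,3)
proof (induction "dim S" arbitrary: S thesis)
  case 0
  then have "S = {0}"
    using dim_eq_0[of S] subspace_0[of S] by auto
  then show ?case
    using "0.prems"(1)[of "{}"] by simp
next
  case (Suc d)
  have "S \<noteq> {0}"
    using Suc.hyps(2) by auto
  then obtain x \<mu> where x: "x \<in> S" "norm x = 1" "M *v x = \<mu> *\<^sub>R x"
    using symmetric_matrix_eigenvector_in_subspace[OF sym Suc.prems(2)] Suc.prems(3) by metis
  have "x \<noteq> 0"
    using x(2) by auto
  define S' where "S' = {y \<in> S. x \<bullet> y = 0}"
  have "subspace S'"
    using Suc.prems(2) by (auto simp: S'_def subspace_def inner_add_right)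
  moreover have "dim S' = d"
    using dim_orthogonal_complement_in_subspace[OF Suc.prems(2) x(1) \<open>x \<noteq> 0\<close>] Suc.hyps(2)
    by (simp add: S'_def)
  moreover have "M *v y \<in> S'" if "y \<in> S'" for y
    using that Suc.prems(3) x(3) symmetric_matrix_inner[OF sym, of x y]
    by (simp add: S'_def)
  ultimately obtain B where B: "B \<subseteq> S'" "pairwise orthogonal B" "\<And>x. x \<in> B \<Longrightarrow> norm x = 1"
    "span B = S'" "\<And>x. x \<in> B \<Longrightarrow> \<exists>\<mu>. M *v x = \<mu> *\<^sub>R x"
    using Suc.hyps(1) by blast
  show ?case
  proof (rule Suc.prems(1)[of "insert x B"])
    show "insert x B \<subseteq> S"
      using B(1) x(1) by (auto simp: S'_def)
    show "pairwise orthogonal (insert x B)"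
      using B(1,2) by (auto simp: pairwise_insert orthogonal_def inner_commute S'_def)
    show "span (insert x B) = S"
      using span_insert_orthogonal_complement[OF Suc.prems(2) x(1)] x(2) B(4)
      by (simp add: S'_def norm_eq_1)
    show "norm y = 1" if "y \<in> insert x B" for y
      using that B(3) x(2) by blast
    show "\<exists>\<mu>. M *v y = \<mu> *\<^sub>R y" if "y \<in> insert x B" for y
      using that B(5) x(3) by blast
  qed
qed

lemma orthonormal_on_union:
  assumes "orthonormal_on K1 f" "orthonormal_on K2 g" "\<And>i k. i \<in> K1 \<Longrightarrow> k \<in> K2 \<Longrightarrow> f i \<bullet> g k = 0"
  shows "orthonormal_on (K1 \<union> K2) (\<lambda>i. if i \<in> K1 then f i else g i)"
  using assms by (auto simp: orthonormal_on_def inner_commute)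

lemma orthonormal_on_bij_betw:
  assumes "bij_betw \<phi> K C" "pairwise orthogonal C" "\<And>x. x \<in> C \<Longrightarrow> norm x = 1"
  shows "orthonormal_on K \<phi>"
  unfolding orthonormal_on_def
proof (intro ballI)
  fix i k assume "i \<in> K" "k \<in> K"
  then have "\<phi> i \<in> C" "\<phi> k \<in> C" "\<phi> i = \<phi> k \<longleftrightarrow> i = k"
    using assms(1) by (auto simp: bij_betw_def inj_on_def)
  then show "\<phi> i \<bullet> \<phi> k = (if i = k then 1 else 0)"
    using assms(2,3) by (auto simp: pairwise_def orthogonal_def norm_eq_1)
qed

lemma orthonormal_on_extend:
  fixes g1 :: "'i \<Rightarrow> real^'n"
  assumes S: "subspace S" "dim S = card K" and K: "finite K" "K1 \<subseteq> K"
    and g1: "orthonormal_on K1 g1" "g1 ` K1 \<subseteq> S"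
  obtains g where "orthonormal_on K g" "\<And>i. i \<in> K1 \<Longrightarrow> g i = g1 i" "g ` K \<subseteq> S"
proof -
  define T where "T = {y \<in> S. \<forall>x\<in>span (g1 ` K1). orthogonal x y}"
  have "span (g1 ` K1) \<subseteq> S"
    using S g1 by (simp add: span_minimal)
  then have "dim T + dim (span (g1 ` K1)) = dim S"
    unfolding T_def by (rule dim_subspace_orthogonal_to_vectors[OF subspace_span S(1)])
  then have "dim T = card (K - K1)"
    using S(2) K orthonormal_on_dim_span[OF g1(1)] by (simp add: card_Diff_subset finite_subset)
  moreover have "subspace T"
    using S(1) by (auto simp: T_def subspace_def orthogonal_clauses)
  ultimately obtain C where C: "C \<subseteq> T" "pairwise orthogonal C" "\<And>x. x \<in> C \<Longrightarrow> norm x = 1"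
    "independent C" "card C = card (K - K1)"
    using orthonormal_basis_subspace by metis
  moreover have "finite C"
    using C(4) by (rule independent_imp_finite)
  ultimately obtain \<phi> where \<phi>: "bij_betw \<phi> (K - K1) C"
    using finite_same_card_bij[of "K - K1" C] K(1) by auto
  have \<phi>T: "\<phi> k \<in> T" if "k \<in> K - K1" for k
    using \<phi> C(1) that by (auto simp: bij_betw_def)
  have "orthonormal_on (K1 \<union> (K - K1)) (\<lambda>i. if i \<in> K1 then g1 i else \<phi> i)"
    using \<phi>T span_base[of _ "g1 ` K1"]
    by (intro orthonormal_on_union g1(1) orthonormal_on_bij_betw[OF \<phi> C(2,3)])
      (auto simp: T_def orthogonal_def)
  moreover have "K1 \<union> (K - K1) = K"
    using K(2) by blast
  moreover have "(\<lambda>i. if i \<in> K1 then g1 i else \<phi> i) ` K \<subseteq> S"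
    using g1(2) \<phi>T by (auto simp: T_def)
  ultimately show ?thesis
    using that[of "\<lambda>i. if i \<in> K1 then g1 i else \<phi> i"] by simp
qed

lemma orthogonal_matrix_map_orthonormal:
  fixes a b :: "'i \<Rightarrow> real^'n"
  assumes a: "orthonormal_on K a" and b: "orthonormal_on K b" and K: "finite K"
  obtains U where "orthogonal_matrix U" "\<And>i. i \<in> K \<Longrightarrow> U *v a i = b i"
proof -
  define Aperp Bperp where "Aperp = {y. \<forall>x\<in>span (a ` K). orthogonal x y}"
    and "Bperp = {y. \<forall>x\<in>span (b ` K). orthogonal x y}"
  have "dim Aperp = dim Bperp"
    using dim_subspace_orthogonal_to_vectors[of "span (a ` K)" UNIV]
      dim_subspace_orthogonal_to_vectors[of "span (b ` K)" UNIV]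
      orthonormal_on_dim_span[OF a] orthonormal_on_dim_span[OF b]
    by (simp add: Aperp_def Bperp_def)
  then obtain g where g: "linear g" "g ` Aperp = Bperp" "\<And>x. x \<in> Aperp \<Longrightarrow> norm (g x) = norm x"
    using isometry_subspaces[of Aperp Bperp]
    by (auto simp: Aperp_def Bperp_def subspace_orthogonal_to_vectors)
  define f where "f x = (\<Sum>i\<in>K. (a i \<bullet> x) *\<^sub>R b i) + g (x - proj_matrix K a *v x)" for x
  have "linear (\<lambda>x. \<Sum>i\<in>K. (a i \<bullet> x) *\<^sub>R b i)"
    by (rule linearI) (simp_all add: inner_add_right scaleR_add_left sum.distrib scaleR_sum_right)
  moreover have "linear (\<lambda>x. g (x - proj_matrix K a *v x))"
    using linear_compose[OF linear_compose_sub[OF linear_id matrix_vector_mul_linear] g(1)]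
    by (simp add: o_def)
  ultimately have "linear f"
    unfolding f_def by (rule linear_compose_add)
  moreover have "norm (f x) = norm x" for x
  proof -
    define p q y where "p = proj_matrix K a *v x" and "q = (\<Sum>i\<in>K. (a i \<bullet> x) *\<^sub>R b i)"
      and "y = x - p"
    have "y \<in> Aperp"
      using proj_matrix_residual_orthogonal[OF a K]
      by (auto simp: Aperp_def y_def p_def orthogonal_def inner_commute)
    then have "g y \<in> Bperp" "norm (g y) = norm y"
      using g by auto
    moreover have "p \<in> span (a ` K)" "q \<in> span (b ` K)"
      unfolding p_def q_def proj_matrix_mult_vec by (intro span_sum span_mul span_base; simp)+
    ultimately have "p \<bullet> y = 0" "q \<bullet> g y = 0"
      using \<open>y \<in> Aperp\<close> by (auto simp: Aperp_def Bperp_def orthogonal_def)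
    moreover have "p \<bullet> p = q \<bullet> q"
      unfolding p_def q_def proj_matrix_mult_vec
      by (simp add: inner_sum_left orthonormal_on_inner_sum[OF a K] orthonormal_on_inner_sum[OF b K])
    moreover have "x = p + y" "f x = q + g y"
      by (simp_all add: y_def p_def q_def f_def)
    ultimately show ?thesis
      using \<open>norm (g y) = norm y\<close>
      by (simp add: norm_eq_sqrt_inner inner_add_left inner_add_right inner_commute
          flip: dot_square_norm)
  qed
  ultimately have "orthogonal_transformation f"
    by (simp add: orthogonal_transformation)
  moreover have "f (a k) = b k" if "k \<in> K" for k
    using orthonormal_on_sum_inner[OF a K that, of b] orthonormal_on_sum_inner[OF a K that, of a]
      linear_0[OF g(1)]
    by (simp add: f_def proj_matrix_mult_vec)
  ultimately show ?thesis
    using that[of "matrix f"] by (simp add: orthogonal_transformation_matrix matrix_works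
        orthogonal_transformation_linear)
qed

lemma orthonormal_on_sgn:
  fixes x :: "'i \<Rightarrow> real^'n"
  assumes "\<And>i k. i \<in> K \<Longrightarrow> k \<in> K \<Longrightarrow> i \<noteq> k \<Longrightarrow> x i \<bullet> x k = 0"
    and "\<And>i. i \<in> K \<Longrightarrow> x i \<noteq> 0"
  shows "orthonormal_on K (\<lambda>i. sgn (x i))"
  unfolding orthonormal_on_def
proof (intro ballI)
  fix i k assume "i \<in> K" "k \<in> K"
  show "sgn (x i) \<bullet> sgn (x k) = (if i = k then 1 else 0)"
  proof (cases "i = k")
    case True
    have "norm (sgn (x i)) = 1"
      using assms(2)[OF \<open>i \<in> K\<close>] by (simp add: norm_sgn)
    then show ?thesis
      using True by (simp add: norm_eq_1)
  next
    case False
    then show ?thesis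
      using assms(1)[OF \<open>i \<in> K\<close> \<open>k \<in> K\<close>] by (simp add: sgn_div_norm)
  qed
qed

lemma orthogonal_matrix_map_orthogonal:
  fixes x y :: "'i \<Rightarrow> real^'n"
  assumes x: "\<And>i k. i \<in> K \<Longrightarrow> k \<in> K \<Longrightarrow> i \<noteq> k \<Longrightarrow> x i \<bullet> x k = 0"
    and y: "\<And>i k. i \<in> K \<Longrightarrow> k \<in> K \<Longrightarrow> i \<noteq> k \<Longrightarrow> y i \<bullet> y k = 0"
    and norm: "\<And>i. i \<in> K \<Longrightarrow> norm (x i) = norm (y i)" and "finite K"
  obtains U where "orthogonal_matrix U" "\<And>i. i \<in> K \<Longrightarrow> U *v x i = y i"
proof -
  define K' where "K' = {i \<in> K. x i \<noteq> 0}"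
  have y0: "y i \<noteq> 0" if "i \<in> K'" for i
    using that norm[of i] by (auto simp: K'_def)
  have "orthonormal_on K' (\<lambda>i. sgn (x i))" "orthonormal_on K' (\<lambda>i. sgn (y i))"
    using x y y0 by (auto simp: K'_def intro!: orthonormal_on_sgn)
  moreover have "finite K'"
    using \<open>finite K\<close> by (simp add: K'_def)
  ultimately obtain U where U: "orthogonal_matrix U" "\<And>i. i \<in> K' \<Longrightarrow> U *v sgn (x i) = sgn (y i)"
    using orthogonal_matrix_map_orthonormal by blast
  have "U *v x i = y i" if "i \<in> K" for i
  proof (cases "x i = 0")
    case False
    then have "U *v (norm (x i) *\<^sub>R sgn (x i)) = norm (y i) *\<^sub>R sgn (y i)"
      using U(2)[of i] norm[OF that] that by (simp add: K'_def matrix_vector_mult_scaleR)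
    moreover have "y i \<noteq> 0"
      using False norm[OF that] by auto
    ultimately show ?thesis
      using False by (simp add: sgn_div_norm)
  qed (use norm[OF that] in simp)
  then show ?thesis
    using that U(1) by blast
qed

section \<open>Principal vectors of projections of equal rank\<close>

lemma proj_matrix_inner_span:
  assumes "orthonormal_on K u" "finite K" "x \<in> span (u ` K)"
  shows "(proj_matrix K u *v y) \<bullet> x = y \<bullet> x"
  using proj_matrix_fixes_span[OF assms] symmetric_matrix_inner[OF transpose_proj_matrix, of y K u x]
  by simp

text \<open>The eigenvectors of \<open>Q P Q\<close> on the range of \<open>Q\<close> have mutually orthogonal images under \<open>P\<close>.\<close>

lemma compression_eigenbasis:
  fixes w v :: "'i \<Rightarrow> real^'n"
  assumes w: "orthonormal_on J w" and v: "orthonormal_on J v" and J: "finite J"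
  obtains B :: "(real^'n) set" where "finite B" "card B = card J" "orthonormal_on B (\<lambda>e. e)"
    "proj_matrix J v = proj_matrix B (\<lambda>e. e)"
    "\<And>e e'. e \<in> B \<Longrightarrow> e' \<in> B \<Longrightarrow> e \<noteq> e' \<Longrightarrow> (proj_matrix J w *v e) \<bullet> (proj_matrix J w *v e') = 0"
proof -
  define P Q where "P = proj_matrix J w" and "Q = proj_matrix J v"
  have P_sym: "transpose P = P" and Q_sym: "transpose Q = Q"
    by (simp_all add: P_def Q_def transpose_proj_matrix)
  have "transpose (Q ** P ** Q) = Q ** P ** Q"
    by (simp add: matrix_transpose_mul P_sym Q_sym matrix_mul_assoc)
  moreover have "Q ** P ** Q *v x \<in> span (v ` J)" for x
    by (simp add: Q_def proj_matrix_mult_vec_in_span flip: matrix_vector_mul_assoc)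
  ultimately obtain B where B: "B \<subseteq> span (v ` J)" "pairwise orthogonal B"
    "\<And>x. x \<in> B \<Longrightarrow> norm x = 1" "span B = span (v ` J)"
    "\<And>x. x \<in> B \<Longrightarrow> \<exists>\<mu>. Q ** P ** Q *v x = \<mu> *\<^sub>R x"
    using symmetric_matrix_orthonormal_eigenbasis[of "Q ** P ** Q" "span (v ` J)"] by blast
  have oB: "orthonormal_on B (\<lambda>e. e)"
    using B(2,3) by (auto simp: orthonormal_on_def pairwise_def orthogonal_def norm_eq_1)
  have "independent B"
    using orthonormal_on_independent[OF oB] by simp
  then have fB: "finite B" and "card B = card J"
    using B(4) orthonormal_on_dim_span[OF v] dim_span_eq_card_independent[of B]
    by (auto simp: independent_imp_finite)
  moreover have "Q = proj_matrix B (\<lambda>e. e)"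
    unfolding Q_def using B(4) by (intro proj_matrix_eq_if_span_eq[OF v J oB fB]) simp
  moreover have "(P *v e) \<bullet> (P *v e') = 0" if e: "e \<in> B" "e' \<in> B" "e \<noteq> e'" for e e'
  proof -
    obtain \<mu> where "Q ** P ** Q *v e' = \<mu> *\<^sub>R e'"
      using B(5) e(2) by blast
    then have "e \<bullet> (Q ** P ** Q *v e') = 0"
      using orthonormal_onD[OF oB e(1,2)] e(3) by simp
    moreover have "Q *v e = e" "Q *v e' = e'"
      using B(1) e proj_matrix_fixes_span[OF v J] by (auto simp: Q_def)
    then have "e \<bullet> (Q ** P ** Q *v e') = e \<bullet> (P *v e')"
      using symmetric_matrix_inner[OF Q_sym, of e] by (simp flip: matrix_vector_mul_assoc)
    moreover have "(P *v e) \<bullet> (P *v e') = e \<bullet> (P *v e')"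
      unfolding P_def by (intro proj_matrix_inner_span[OF w J] proj_matrix_mult_vec_in_span)
    ultimately show ?thesis
      by simp
  qed
  ultimately show ?thesis
    using that[OF fB _ oB] by (simp add: P_def Q_def)
qed

text \<open>The \<open>g\<close> normalise the nonzero vectors \<open>P e\<close> and are completed to an orthonormal basis of
  the range of \<open>P\<close>.\<close>

lemma principal_vectors:
  fixes w v :: "'i \<Rightarrow> real^'n"
  assumes w: "orthonormal_on J w" and v: "orthonormal_on J v" and J: "finite J"
  obtains B :: "(real^'n) set" and g :: "real^'n \<Rightarrow> real^'n" and \<nu> :: "real^'n \<Rightarrow> real"
  where "finite B" "orthonormal_on B (\<lambda>e. e)" "orthonormal_on B g"
    "proj_matrix J v = proj_matrix B (\<lambda>e. e)" "proj_matrix J w = proj_matrix B g"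
    "\<And>e e'. e \<in> B \<Longrightarrow> e' \<in> B \<Longrightarrow> e \<bullet> g e' = (if e = e' then \<nu> e else 0)"
proof -
  define P where "P = proj_matrix J w"
  obtain B where fB: "finite B" and cB: "card B = card J" and oB: "orthonormal_on B (\<lambda>e. e)"
    and Q: "proj_matrix J v = proj_matrix B (\<lambda>e. e)"
    and PB: "\<And>e e'. e \<in> B \<Longrightarrow> e' \<in> B \<Longrightarrow> e \<noteq> e' \<Longrightarrow> (P *v e) \<bullet> (P *v e') = 0"
    using compression_eigenbasis[OF w v J] unfolding P_def by blast
  define \<nu> where "\<nu> e = norm (P *v e)" for e
  define B1 where "B1 = {e \<in> B. P *v e \<noteq> 0}"
  have g1: "orthonormal_on B1 (\<lambda>e. sgn (P *v e))"
    using PB by (intro orthonormal_on_sgn) (auto simp: B1_def)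
  have g1_span: "(\<lambda>e. sgn (P *v e)) ` B1 \<subseteq> span (w ` J)"
    unfolding P_def sgn_div_norm by (auto intro: span_mul proj_matrix_mult_vec_in_span)
  have dim_P: "dim (span (w ` J)) = card B"
    using orthonormal_on_dim_span[OF w] cB by simp
  obtain g where g: "orthonormal_on B g" "\<And>e. e \<in> B1 \<Longrightarrow> g e = sgn (P *v e)"
    "g ` B \<subseteq> span (w ` J)"
    using orthonormal_on_extend[OF subspace_span dim_P fB _ g1 g1_span] by (auto simp: B1_def)
  have P: "P = proj_matrix B g"
    unfolding P_def using g(1,3) fB cB orthonormal_on_dim_span[OF w]
    by (intro proj_matrix_eq_if_span_eq[OF w J g(1) fB] orthonormal_on_span_eq[symmetric]) auto
  have Pe: "P *v e = \<nu> e *\<^sub>R g e" if "e \<in> B" for e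
    using that g(2) by (cases "e \<in> B1") (auto simp: \<nu>_def sgn_div_norm B1_def)
  have "e \<bullet> g e' = (if e = e' then \<nu> e else 0)" if "e \<in> B" "e' \<in> B" for e e'
  proof -
    have "e \<bullet> g e' = (P *v e) \<bullet> g e'"
      using g(3) that(2) proj_matrix_inner_span[OF w J, of "g e'" e] by (auto simp: P_def)
    then show ?thesis
      using Pe[OF that(1)] orthonormal_onD[OF g(1) that] by simp
  qed
  then show ?thesis
    using that[OF fB oB g(1) Q] P by (simp add: P_def)
qed

lemma proj_matrix_mult_vec_kronecker:
  assumes "orthonormal_on K u" "finite K" "k \<in> K" "\<And>i. i \<in> K \<Longrightarrow> u i \<bullet> x = (if i = k then c else 0)"
  shows "proj_matrix K u *v x = c *\<^sub>R u k"
proof -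
  have "proj_matrix K u *v x = (\<Sum>i\<in>K. if i = k then c *\<^sub>R u k else 0)"
    using assms(4) by (auto simp: proj_matrix_mult_vec intro!: sum.cong)
  then show ?thesis
    using assms(2,3) by simp
qed

lemma principal_residual_inner:
  assumes e: "orthonormal_on B e" and g: "orthonormal_on B g"
    and eg: "\<And>i k. i \<in> B \<Longrightarrow> k \<in> B \<Longrightarrow> e i \<bullet> g k = (if i = k then \<nu> i else 0)"
    and "i \<in> B" "k \<in> B"
  shows "(e i - \<nu> i *\<^sub>R g i) \<bullet> (e k - \<nu> k *\<^sub>R g k) = (if i = k then 1 - \<nu> i * \<nu> i else 0)"
  using eg[of i k] eg[of k i] orthonormal_onD[OF e \<open>i \<in> B\<close> \<open>k \<in> B\<close>]
    orthonormal_onD[OF g \<open>i \<in> B\<close> \<open>k \<in> B\<close>] \<open>i \<in> B\<close> \<open>k \<in> B\<close>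
  by (simp add: inner_diff_left inner_diff_right inner_commute algebra_simps)

lemma outer_prod_sandwich: "U ** outer_prod x y ** transpose V = outer_prod (U *v x) (V *v y)"
  by (simp add: matrix_mult_outer_prod outer_prod_mult_matrix)

text \<open>Principal vectors give orthogonal \<open>U, V\<close> with \<open>U P (I - Q) V\<^sup>T = Q (I - P)\<close>.\<close>

lemma unitarily_invariant_norm_proj_compl_commute:
  fixes w v :: "'i \<Rightarrow> real^'n"
  assumes N: "unitarily_invariant_norm N"
    and w: "orthonormal_on J w" and v: "orthonormal_on J v" and J: "finite J"
  shows "N (proj_matrix J w ** (mat 1 - proj_matrix J v))
    = N (proj_matrix J v ** (mat 1 - proj_matrix J w))"
proof -
  obtain B and g :: "real^'n \<Rightarrow> real^'n" and \<nu> where B: "finite B" "orthonormal_on B (\<lambda>e. e)"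
    "orthonormal_on B g" "proj_matrix J v = proj_matrix B (\<lambda>e. e)" "proj_matrix J w = proj_matrix B g"
    and eg: "\<And>e e'. e \<in> B \<Longrightarrow> e' \<in> B \<Longrightarrow> e \<bullet> g e' = (if e = e' then \<nu> e else 0)"
    using principal_vectors[OF w v J] by blast
  have ge: "g e \<bullet> e' = (if e = e' then \<nu> e else 0)" if "e \<in> B" "e' \<in> B" for e e'
    using eg[OF that(2,1)] by (auto simp: inner_commute)
  have Qg: "proj_matrix J v *v g e = \<nu> e *\<^sub>R e" if "e \<in> B" for e
    unfolding B(4) using that by (intro proj_matrix_mult_vec_kronecker[OF B(2,1)]) (auto simp: eg)
  have Pe: "proj_matrix J w *v e = \<nu> e *\<^sub>R g e" if "e \<in> B" for e
    unfolding B(5) using that by (intro proj_matrix_mult_vec_kronecker[OF B(3,1)]) (auto simp: ge)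
  define h f where "h e = g e - \<nu> e *\<^sub>R e" and "f e = e - \<nu> e *\<^sub>R g e" for e
  have hh: "h e \<bullet> h e' = (if e = e' then 1 - \<nu> e * \<nu> e else 0)"
    and ff: "f e \<bullet> f e' = (if e = e' then 1 - \<nu> e * \<nu> e else 0)" if "e \<in> B" "e' \<in> B" for e e'
    using principal_residual_inner[OF B(3,2) ge that] principal_residual_inner[OF B(2,3) eg that]
    by (simp_all add: h_def f_def)
  obtain U where U: "orthogonal_matrix U" "\<And>e. e \<in> B \<Longrightarrow> U *v g e = e"
    using orthogonal_matrix_map_orthonormal[OF B(3,2,1)] by blast
  have "norm (h e) = norm (f e)" if "e \<in> B" for e
    using hh[OF that that] ff[OF that that] by (simp add: norm_eq_sqrt_inner)
  then obtain V where V: "orthogonal_matrix V" "\<And>e. e \<in> B \<Longrightarrow> V *v h e = f e"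
    using orthogonal_matrix_map_orthogonal[of B h f] hh ff B(1) by auto
  have "U ** (proj_matrix J w ** (mat 1 - proj_matrix J v)) ** transpose V
      = (\<Sum>e\<in>B. outer_prod (U *v g e) (V *v h e))"
    by (simp add: B(5) proj_matrix_mult_compl transpose_proj_matrix Qg h_def matrix_mul_sum_left
        matrix_mul_sum_right outer_prod_sandwich cong: sum.cong)
  also have "\<dots> = proj_matrix J v ** (mat 1 - proj_matrix J w)"
    by (simp add: B(4) proj_matrix_mult_compl transpose_proj_matrix Pe U(2) V(2) f_def
        cong: sum.cong)
  finally have "N (proj_matrix J v ** (mat 1 - proj_matrix J w))
      = N (U ** (proj_matrix J w ** (mat 1 - proj_matrix J v)) ** transpose V)"
    by simp
  then show ?thesis
    using unitarily_invariant_norm_orthogonal[OF N U(1), of "transpose V"] V(1) by simp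
qed

section \<open>Polynomials of matrices and eigenvalue gaps\<close>

lemma mat_pow_eigen: "A *v x = c *\<^sub>R x \<Longrightarrow> mat_pow A k *v x = (c ^ k) *\<^sub>R x"
  by (induction k) (simp_all add: matrix_vector_mult_scaleR flip: matrix_vector_mul_assoc)

lemma poly_mat_eigen:
  assumes "A *v x = c *\<^sub>R x"
  shows "poly_mat p A *v x = poly p c *\<^sub>R x"
  by (simp add: poly_mat_def matrix_vector_mult_sum_left scaleR_matrix_vector_assoc
      mat_pow_eigen[OF assms] poly_altdef scaleR_sum_left)

lemma ereal_le_divide_if_scaled_le:
  assumes "0 < \<delta>" and le: "\<And>d. 0 < d \<Longrightarrow> ereal d \<le> \<delta> \<Longrightarrow> d * x \<le> y"
  shows "ereal x \<le> ereal y / \<delta>"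
proof (cases \<delta>)
  case (real d)
  then show ?thesis
    using assms le[of d] by (simp add: pos_le_divide_eq mult.commute)
next
  case PInf
  have "x \<le> 0"
  proof (rule ccontr)
    assume "\<not> x \<le> 0"
    then have "(\<bar>y\<bar> + 1) / x * x \<le> y"
      using PInf by (intro le) auto
    then show False
      using \<open>\<not> x \<le> 0\<close> by simp
  qed
  then show ?thesis
    using PInf by simp
qed (use assms in simp)

lemma sorted_outside_block:
  fixes \<psi> :: "nat \<Rightarrow> real"
  assumes sorted: "\<And>i k. 1 \<le> i \<Longrightarrow> i \<le> k \<Longrightarrow> k \<le> n \<Longrightarrow> \<psi> i \<le> \<psi> k" and "j + r \<le> n"
    and d: "ereal d \<le> min (ext_eig n \<psi> (j + r + 1) - ereal b) (ereal a - ext_eig n \<psi> j)"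
    and k: "k \<in> {1..n} - {j+1..j+r}"
  shows "\<psi> k \<le> a - d \<or> b + d \<le> \<psi> k"
proof (cases "k \<le> j")
  case True
  then have "d \<le> a - \<psi> j" "\<psi> k \<le> \<psi> j"
    using d k sorted[of k j] \<open>j + r \<le> n\<close> by (auto simp: ext_eig_def)
  then show ?thesis
    by simp
next
  case False
  then have "d \<le> \<psi> (j + r + 1) - b" "\<psi> (j + r + 1) \<le> \<psi> k"
    using d k sorted[of "j + r + 1" k] by (auto simp: ext_eig_def)
  then show ?thesis
    by simp
qed

lemma calA_separated:
  assumes cover: "calA1 n J f b \<union> calA2 n J f a = {1..n} - J" and "k \<in> {1..n} - J"
    and d: "ereal d \<le> min ((INF i\<in>calA1 n J f b. ereal (f i)) - ereal b)
                           (ereal a - (SUP i\<in>calA2 n J f a. ereal (f i)))"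
  shows "f k \<le> a - d \<or> b + d \<le> f k"
proof (cases "k \<in> calA1 n J f b")
  case True
  then have "ereal d \<le> ereal (f k) - ereal b"
    using d by (meson INF_lower ereal_minus_mono min.bounded_iff order.trans order_refl)
  then show ?thesis
    by simp
next
  case False
  then have "k \<in> calA2 n J f a"
    using cover \<open>k \<in> {1..n} - J\<close> by blast
  then have "ereal d \<le> ereal a - ereal (f k)"
    using d by (meson SUP_upper ereal_minus_mono min.bounded_iff order.trans order_refl)
  then show ?thesis
    by simp
qed

theorem theorem5:
  fixes Phi Psi :: "real^'n^'n"
    and phi psi :: "nat \<Rightarrow> real"
    and w v :: "nat \<Rightarrow> real^'n"
    and j r :: nat
    and p :: "real poly"
    and N :: "real^'n^'n \<Rightarrow> real"
  defines "n \<equiv> CARD('n)"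
  defines "J \<equiv> {j+1..j+r}"
  defines "pp \<equiv> (\<lambda>i. poly p (phi i))"
  defines "a1 \<equiv> Min (pp ` J)"
  defines "b1 \<equiv> Max (pp ` J)"
  defines "delta1 \<equiv> min (ext_eig n psi (j+r+1) - ereal b1) (ereal a1 - ext_eig n psi j)"
  defines "a2 \<equiv> psi (j+1)"
  defines "b2 \<equiv> psi (j+r)"
  defines "delta2 \<equiv> min ((INF i\<in>calA1 n J pp b2. ereal (pp i)) - ereal b2)
                          (ereal a2 - (SUP i\<in>calA2 n J pp a2. ereal (pp i)))"
  assumes symPhi: "transpose Phi = Phi"
    and symPsi: "transpose Psi = Psi"
    and phi_sorted: "\<And>i k. 1 \<le> i \<Longrightarrow> i \<le> k \<Longrightarrow> k \<le> n \<Longrightarrow> phi i \<le> phi k"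
    and psi_sorted: "\<And>i k. 1 \<le> i \<Longrightarrow> i \<le> k \<Longrightarrow> k \<le> n \<Longrightarrow> psi i \<le> psi k"
    and w_eig: "\<And>i. i \<in> {1..n} \<Longrightarrow> Phi *v w i = phi i *\<^sub>R w i"
    and v_eig: "\<And>i. i \<in> {1..n} \<Longrightarrow> Psi *v v i = psi i *\<^sub>R v i"
    and w_on: "\<And>i k. i \<in> {1..n} \<Longrightarrow> k \<in> {1..n} \<Longrightarrow> w i \<bullet> w k = (if i = k then 1 else 0)"
    and v_on: "\<And>i k. i \<in> {1..n} \<Longrightarrow> k \<in> {1..n} \<Longrightarrow> v i \<bullet> v k = (if i = k then 1 else 0)"
    and r_pos: "1 \<le> r"
    and jr_le: "j + r \<le> n"
    and gap1: "ext_eig n phi (j+1) - ext_eig n phi j > 0"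
    and gap2: "ext_eig n phi (j+r+1) - ext_eig n phi (j+r) > 0"
    and gap3: "ext_eig n psi (j+1) - ext_eig n psi j > 0"
    and gap4: "ext_eig n psi (j+r+1) - ext_eig n psi (j+r) > 0"
    and N_ui: "unitarily_invariant_norm N"
  shows "(calA1 n J pp b1 \<union> calA2 n J pp a1 = {1..n} - J \<and>
             delta1 > 0 \<and> ereal (a1 - psi (j+1)) < delta1 \<and> ereal (psi (j+r) - b1) < delta1
           \<longrightarrow> ereal (N (proj_mat w J ** (mat 1 - proj_mat v J)))
                 \<le> ereal (N (poly_mat p Phi - Psi)) / delta1)
       \<and> (calA1 n J pp b2 \<union> calA2 n J pp a2 = {1..n} - J \<and>
             delta2 > 0 \<and> ereal (a2 - Min (pp ` J)) < delta2 \<and> ereal (Max (pp ` J) - b2) < delta2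
           \<longrightarrow> ereal (N (proj_mat w J ** (mat 1 - proj_mat v J)))
                 \<le> ereal (N (poly_mat p Phi - Psi)) / delta2)"
proof -
  have K: "finite {1..n}" "card {1..n} = CARD('n)" and "J \<subseteq> {1..n}" "J \<noteq> {}" "finite J"
    using jr_le r_pos by (auto simp: \<open>n \<equiv> _\<close> \<open>J \<equiv> _\<close>)
  have w: "orthonormal_on {1..n} w" and v: "orthonormal_on {1..n} v"
    using w_on v_on by (simp_all add: orthonormal_on_def)
  have pPhi: "poly_mat p Phi *v w i = pp i *\<^sub>R w i" if "i \<in> {1..n}" for i
    using poly_mat_eigen[OF w_eig[OF that]] by (simp add: \<open>pp \<equiv> _\<close>)
  have pp_J: "a1 \<le> pp i \<and> pp i \<le> b1" and psi_J: "a2 \<le> psi i \<and> psi i \<le> b2" if "i \<in> J" for i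
    using that \<open>finite J\<close> jr_le psi_sorted[of "j + 1" i] psi_sorted[of i "j + r"]
    by (auto simp: \<open>a1 \<equiv> _\<close> \<open>b1 \<equiv> _\<close> \<open>a2 \<equiv> _\<close> \<open>b2 \<equiv> _\<close> \<open>J \<equiv> _\<close>)
  have "a1 \<le> b1" "a2 \<le> b2"
    using pp_J psi_J \<open>J \<noteq> {}\<close> by force+
  have "d * N (proj_matrix J w ** (mat 1 - proj_matrix J v)) \<le> N (poly_mat p Phi - Psi)"
    if "0 < d" "ereal d \<le> delta1" for d
    using sorted_outside_block[where \<psi> = psi, OF psi_sorted jr_le] that \<open>J \<subseteq> {1..n}\<close>
    by (intro davis_kahan_sin_theta[OF N_ui w v K pPhi v_eig _ \<open>a1 \<le> b1\<close> _ pp_J])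
      (auto simp: \<open>delta1 \<equiv> _\<close> \<open>J \<equiv> _\<close>)
  moreover have "d * N (proj_matrix J w ** (mat 1 - proj_matrix J v)) \<le> N (poly_mat p Phi - Psi)"
    if "calA1 n J pp b2 \<union> calA2 n J pp a2 = {1..n} - J" "0 < d" "ereal d \<le> delta2" for d
  proof -
    have "d * N (proj_matrix J v ** (mat 1 - proj_matrix J w)) \<le> N (Psi - poly_mat p Phi)"
      using calA_separated[OF that(1)] that(2,3) \<open>J \<subseteq> {1..n}\<close>
      by (intro davis_kahan_sin_theta[OF N_ui v w K v_eig pPhi _ \<open>a2 \<le> b2\<close> _ psi_J])
        (auto simp: \<open>delta2 \<equiv> _\<close>)
    then show ?thesis
      using unitarily_invariant_norm_proj_compl_commute[OF N_ui orthonormal_on_subset[OF w]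
          orthonormal_on_subset[OF v] \<open>finite J\<close>] \<open>J \<subseteq> {1..n}\<close>
        unitarily_invariant_norm_minus_commute[OF N_ui, of Psi]
      by simp
  qed
  ultimately show ?thesis
    by (auto simp: proj_mat_eq_proj_matrix intro: ereal_le_divide_if_scaled_le)
qed

end
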